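(* Let $n,d$ be natural numbers and $h$ an integer. Let $(z_j)$ be a sequence of Gaussian integers such that every two consecutive terms satisfy $|z_{j+1}-z_j|=1$, and suppose there are indices $j_1,j_2$ with $z_{j_2}-z_{j_1}=n+ih$. If $k(n,d)\geq |r(n,d)|+|h|+1$, then there exist indices $j_3,j_4$ with $z_{j_3}-z_{j_4}=d$.
   Context: For integers $n$ and $d\ge1$, $k(n,d)$ and $r(n,d)$ are the unique integers with $n=k(n,d)\,d+r(n,d)$ and $r(n,d)\in\left[-\lfloor d/2\rfloor,\ \lceil d/2\rceil-1\right]$. *)

theory Defs
  imports Complex_Main
begin

definition gauss_int :: "complex \<Rightarrow> bool" where
  "gauss_int z \<longleftrightarrow> Re z \<in> \<int> \<and> Im z \<in> \<int>"

definition cdiv_k :: "int \<Rightarrow> int \<Rightarrow> int" where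
  "cdiv_k n d = (THE k. \<exists>r. n = k * d + r \<and> - (d div 2) \<le> r \<and> r \<le> (d + 1) div 2 - 1)"

definition cdiv_r :: "int \<Rightarrow> int \<Rightarrow> int" where
  "cdiv_r n d = (THE r. \<exists>k. n = k * d + r \<and> - (d div 2) \<le> r \<and> r \<le> (d + 1) div 2 - 1)"

end

theory Submission
  imports Defs
begin

text \<open>
  Pass from the Gaussian integers to a lattice walk \<open>(X t, Y t)\<close> with displacement
  \<open>(k d + r, h)\<close> and argue on a shortest walk without a horizontal chord of length \<open>d\<close>.
  Minimality makes it self-avoiding, and forces any two of its points at equal height whose
  abscissae differ by a nonzero multiple of \<open>d\<close> to be its two endpoints. Closing the walk by a
  straight path of \<open>|r| + |h|\<close> steps to \<open>(k d, 0)\<close> gives a loop that winds once around the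
  cylinder \<open>(\<int>/k d\<int>) \<times> \<int>\<close>. For each \<open>j = 1, \<dots>, k - 1\<close> the translate of this loop by
  \<open>j d\<close> meets the loop at least twice: the crossing number of the translated point with the loop
  is locally constant off the loop, \<open>0\<close> at the top and \<open>1\<close> at the bottom, and a single
  meeting would leave the remaining translated points connected. A meeting can neither join two
  points of the original walk nor two points of the closing path, which is narrower than \<open>d\<close>;
  so the \<open>2 (k - 1)\<close> meetings are charged injectively to the interior points of the closing path,
  two per point, and \<open>k \<le> |r| + |h|\<close>.
\<close>

lemma chain_eq:
  assumes "\<And>i. lo \<le> i \<Longrightarrow> i < hi \<Longrightarrow> g i = g (Suc i)" "lo \<le> hi"
  shows "g lo = g hi"
  using assms(2)
proof (induction rule: dec_induct)
  case (step n)
  then show ?case using assms(1)[of n] by simp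
qed simp

lemma cyclic_chain_eq:
  assumes step: "\<And>i. i < M \<Longrightarrow> P i \<Longrightarrow> P (Suc i) \<Longrightarrow> g i = g (Suc i)"
    and wrap: "P M = P 0" "g M = g 0"
    and one_gap: "\<And>u v. u < M \<Longrightarrow> v < M \<Longrightarrow> \<not> P u \<Longrightarrow> \<not> P v \<Longrightarrow> u = v"
    and t: "t1 < M" "t2 < M" "P t1" "P t2"
  shows "g t1 = g t2"
proof -
  have run: "g u = g v" if "u \<le> v" "v \<le> M" "\<And>i. u \<le> i \<Longrightarrow> i \<le> v \<Longrightarrow> P i" for u v
    by (rule chain_eq) (use that step in auto)
  have ordered: "g u = g v" if uv: "u \<le> v" "v < M" "P u" "P v" for u v
  proof (cases "\<exists>q. u < q \<and> q < v \<and> \<not> P q")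
    case False
    show ?thesis
    proof (rule run)
      fix i assume "u \<le> i" "i \<le> v"
      with False uv show "P i" by (cases "i = u \<or> i = v") auto
    qed (use uv in auto)
  next
    case True
    then obtain q where q: "u < q" "q < v" "\<not> P q" by blast
    have good: "P i" if "i < M" "i \<noteq> q" for i
      using one_gap[of i q] that q uv by auto
    have "P M" using good[of 0] wrap(1) q uv by simp
    have "g v = g M"
    proof (rule run)
      fix i assume "v \<le> i" "i \<le> M"
      with good q \<open>P M\<close> show "P i" by (cases "i = M") auto
    qed (use uv in auto)
    moreover have "g 0 = g u"
      by (rule run) (use uv q good in auto)
    ultimately show ?thesis using wrap(2) by simp
  qed
  show ?thesis
  proof (cases "t1 \<le> t2")
    case True
    with ordered t show ?thesis by blast
  next
    case False
    with ordered[of t2 t1] t show ?thesis by simp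
  qed
qed

lemma div_succ_int:
  fixes z N :: int
  assumes "0 < N"
  shows "(z + 1) div N = z div N + of_bool (N dvd z + 1)"
proof (cases "N dvd z + 1")
  case True
  then obtain q where q: "z + 1 = N * q" by blast
  then have "z = (N - 1) + N * (q - 1)" by (simp add: algebra_simps)
  then have "z div N = q - 1" using assms by simp
  with q True assms show ?thesis by simp
next
  case False
  define q where "q = (z + 1) div N"
  have "0 \<le> (z + 1) mod N" "(z + 1) mod N < N" "(z + 1) mod N \<noteq> 0"
    using False assms by (simp_all add: dvd_eq_mod_eq_0)
  moreover have "z + 1 = N * q + (z + 1) mod N"
    unfolding q_def by simp
  then have "z = ((z + 1) mod N - 1) + N * q" by simp
  moreover have "((z + 1) mod N - 1) div N = 0"
    using calculation(1-3) by (intro div_pos_pos_trivial) linarith+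
  then have "((z + 1) mod N - 1 + N * q) div N = q"
    using assms by simp
  ultimately have "z div N = q" by simp
  with False show ?thesis unfolding q_def by simp
qed

lemma dvd_diff_shift_iff:
  fixes N x a :: int
  shows "N dvd x + N - a \<longleftrightarrow> N dvd x - a" and "N dvd x - (a + N) \<longleftrightarrow> N dvd x - a"
  using dvd_add_triv_right_iff[of N "x - a"] dvd_add_triv_right_iff[of N "x - (a + N)"]
  by (simp_all add: algebra_simps)

section \<open>Lattice walks\<close>

definition lattice_walk :: "(nat \<Rightarrow> int) \<Rightarrow> (nat \<Rightarrow> int) \<Rightarrow> nat \<Rightarrow> bool" where
  "lattice_walk X Y m \<longleftrightarrow> (\<forall>t<m. \<bar>X (Suc t) - X t\<bar> + \<bar>Y (Suc t) - Y t\<bar> = 1)"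

definition has_chord :: "int \<Rightarrow> (nat \<Rightarrow> int) \<Rightarrow> (nat \<Rightarrow> int) \<Rightarrow> nat \<Rightarrow> bool" where
  "has_chord d X Y m \<longleftrightarrow> (\<exists>s\<le>m. \<exists>t\<le>m. X t = X s + d \<and> Y t = Y s)"

lemma lattice_walk_step_cases:
  assumes "lattice_walk X Y m" "t < m"
  obtains "X (Suc t) = X t + 1" "Y (Suc t) = Y t"
    | "X (Suc t) = X t - 1" "Y (Suc t) = Y t"
    | "X (Suc t) = X t" "Y (Suc t) = Y t + 1"
    | "X (Suc t) = X t" "Y (Suc t) = Y t - 1"
  using assms unfolding lattice_walk_def by (smt (verit))

lemma lattice_walk_segment:
  assumes "lattice_walk X Y m" "s + l \<le> m"
  shows "lattice_walk (\<lambda>i. X (s + i)) (\<lambda>i. Y (s + i)) l"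
  using assms unfolding lattice_walk_def by auto

lemma has_chord_segment:
  assumes "has_chord d (\<lambda>i. X (s + i)) (\<lambda>i. Y (s + i)) l" "s + l \<le> m"
  shows "has_chord d X Y m"
proof -
  from assms(1) obtain a b where "a \<le> l" "b \<le> l" "X (s + b) = X (s + a) + d" "Y (s + b) = Y (s + a)"
    unfolding has_chord_def by blast
  with assms(2) show ?thesis unfolding has_chord_def by (metis add_le_mono1 add.commute order_trans)
qed

lemma lattice_walk_reverse:
  assumes "lattice_walk X Y m"
  shows "lattice_walk (\<lambda>i. X (m - i)) (\<lambda>i. Y (m - i)) m"
  unfolding lattice_walk_def
proof (intro allI impI)
  fix i assume "i < m"
  then have "m - i = Suc (m - Suc i)" "m - Suc i < m" by auto
  with assms show "\<bar>X (m - Suc i) - X (m - i)\<bar> + \<bar>Y (m - Suc i) - Y (m - i)\<bar> = 1"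
    unfolding lattice_walk_def by (metis abs_minus_commute)
qed

lemma has_chord_reverse:
  assumes "has_chord d (\<lambda>i. X (m - i)) (\<lambda>i. Y (m - i)) m"
  shows "has_chord d X Y m"
  using assms unfolding has_chord_def by (meson diff_le_self)

lemma lattice_walk_append:
  assumes "lattice_walk X Y m" "lattice_walk X' Y' l" "X' 0 = X m" "Y' 0 = Y m"
  shows "lattice_walk (\<lambda>t. if t \<le> m then X t else X' (t - m)) (\<lambda>t. if t \<le> m then Y t else Y' (t - m)) (m + l)"
  unfolding lattice_walk_def
proof (intro allI impI)
  fix t assume "t < m + l"
  show "\<bar>(if Suc t \<le> m then X (Suc t) else X' (Suc t - m)) - (if t \<le> m then X t else X' (t - m))\<bar>
      + \<bar>(if Suc t \<le> m then Y (Suc t) else Y' (Suc t - m)) - (if t \<le> m then Y t else Y' (t - m))\<bar> = 1"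
  proof (cases "t < m")
    case True
    with assms(1) show ?thesis unfolding lattice_walk_def by auto
  next
    case False
    then have "Suc t - m = Suc (t - m)" "t - m < l" using \<open>t < m + l\<close> by auto
    with False assms(2-4) show ?thesis unfolding lattice_walk_def by (cases "t = m") auto
  qed
qed

lemma loop_erasure:
  assumes w: "lattice_walk X Y m" and st: "s < t" "t \<le> m" and eq: "X s = X t" "Y s = Y t"
  obtains X' Y' m' where "m' < m" "lattice_walk X' Y' m'"
    "X' 0 = X 0" "Y' 0 = Y 0" "X' m' = X m" "Y' m' = Y m"
    "has_chord d X' Y' m' \<Longrightarrow> has_chord d X Y m"
proof -
  define f where "f i = (if i \<le> s then i else i + (t - s))" for i
  define m' where "m' = m - (t - s)"
  have wk: "lattice_walk (X \<circ> f) (Y \<circ> f) m'"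
    unfolding lattice_walk_def
  proof (intro allI impI)
    fix i assume "i < m'"
    then consider "Suc i \<le> s" | "i = s" | "s < i" by linarith
    then show "\<bar>(X \<circ> f) (Suc i) - (X \<circ> f) i\<bar> + \<bar>(Y \<circ> f) (Suc i) - (Y \<circ> f) i\<bar> = 1"
    proof cases
      case 1 with w st show ?thesis unfolding lattice_walk_def f_def by auto
    next
      case 2 with w st eq \<open>i < m'\<close> show ?thesis unfolding lattice_walk_def f_def m'_def by auto
    next
      case 3 with w st \<open>i < m'\<close> show ?thesis unfolding lattice_walk_def f_def m'_def by auto
    qed
  qed
  have "has_chord d X Y m" if "has_chord d (X \<circ> f) (Y \<circ> f) m'"
  proof -
    from that obtain a b where "a \<le> m'" "b \<le> m'" "X (f b) = X (f a) + d" "Y (f b) = Y (f a)"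
      unfolding has_chord_def by auto
    moreover have "f i \<le> m" if "i \<le> m'" for i using that st unfolding f_def m'_def by auto
    ultimately show ?thesis unfolding has_chord_def by blast
  qed
  moreover have "(X \<circ> f) m' = X m" "(Y \<circ> f) m' = Y m"
    using st eq unfolding f_def m'_def by (cases "t = m"; auto)+
  ultimately show thesis
    using that[of m' "X \<circ> f" "Y \<circ> f"] wk st unfolding f_def m'_def by auto
qed

lemma lattice_walk_between:
  assumes "\<And>m. lattice_walk X Y m"
  obtains X' Y' m where "lattice_walk X' Y' m" "X' m - X' 0 = X j - X i" "Y' m - Y' 0 = Y j - Y i"
    "has_chord d X' Y' m \<Longrightarrow> \<exists>s t. X t = X s + d \<and> Y t = Y s"
proof (cases "i \<le> j")
  case True
  have "lattice_walk (\<lambda>u. X (i + u)) (\<lambda>u. Y (i + u)) (j - i)"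
    using lattice_walk_segment[OF assms[of j]] True by simp
  moreover have "\<exists>s t. X t = X s + d \<and> Y t = Y s" if "has_chord d (\<lambda>u. X (i + u)) (\<lambda>u. Y (i + u)) (j - i)"
    using has_chord_segment[OF that, of j] True unfolding has_chord_def by auto
  ultimately show thesis
    using that True by simp
next
  case False
  have "lattice_walk (\<lambda>u. X (i - u)) (\<lambda>u. Y (i - u)) i"
    using lattice_walk_reverse[OF assms[of i]] by simp
  then have "lattice_walk (\<lambda>u. X (i - u)) (\<lambda>u. Y (i - u)) (i - j)"
    using lattice_walk_segment[where s = 0 and l = "i - j"] by simp
  moreover have "\<exists>s t. X t = X s + d \<and> Y t = Y s" if "has_chord d (\<lambda>u. X (i - u)) (\<lambda>u. Y (i - u)) (i - j)"
  proof -
    have "has_chord d (\<lambda>u. X (i - u)) (\<lambda>u. Y (i - u)) i"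
      using has_chord_segment[where X = "\<lambda>u. X (i - u)" and Y = "\<lambda>u. Y (i - u)" and s = 0 and m = i] that
      by simp
    then show ?thesis
      using has_chord_reverse unfolding has_chord_def by blast
  qed
  ultimately show thesis
    using that False by simp
qed

lemma exists_straight_lattice_walk:
  fixes x y x' y' :: int
  defines "L \<equiv> nat (\<bar>x' - x\<bar> + \<bar>y' - y\<bar>)"
  obtains X Y where "lattice_walk X Y L" "X 0 = x" "Y 0 = y" "X L = x'" "Y L = y'"
    "\<And>i j. \<bar>X i - X j\<bar> \<le> \<bar>x' - x\<bar>"
proof -
  define a where "a = x' - x"
  define b where "b = y' - y"
  define X where "X i = x + sgn a * min (int i) \<bar>a\<bar>" for i
  define Y where "Y i = y + sgn b * max 0 (int i - \<bar>a\<bar>)" for i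
  have L: "int L = \<bar>a\<bar> + \<bar>b\<bar>"
    unfolding L_def a_def b_def by simp
  have "lattice_walk X Y L"
    unfolding lattice_walk_def
  proof (intro allI impI)
    fix i assume "i < L"
    show "\<bar>X (Suc i) - X i\<bar> + \<bar>Y (Suc i) - Y i\<bar> = 1"
    proof (cases "int i < \<bar>a\<bar>")
      case True
      then have "X (Suc i) - X i = sgn a" "Y (Suc i) = Y i"
        unfolding X_def Y_def by (auto simp: algebra_simps)
      with True show ?thesis by (simp add: abs_sgn_eq)
    next
      case False
      with \<open>i < L\<close> L have "b \<noteq> 0" by auto
      from False have "X (Suc i) = X i" "Y (Suc i) - Y i = sgn b"
        unfolding X_def Y_def by (auto simp: algebra_simps)
      with \<open>b \<noteq> 0\<close> show ?thesis by (simp add: abs_sgn_eq)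
    qed
  qed
  moreover have "X L = x'" "Y L = y'"
    unfolding X_def Y_def using L by (simp_all add: a_def b_def sgn_mult_abs)
  moreover have "\<bar>X i - X j\<bar> \<le> \<bar>x' - x\<bar>" for i j
  proof -
    have "X i - X j = sgn a * (min (int i) \<bar>a\<bar> - min (int j) \<bar>a\<bar>)"
      unfolding X_def by (simp add: right_diff_distrib)
    then have "\<bar>X i - X j\<bar> = \<bar>sgn a\<bar> * \<bar>min (int i) \<bar>a\<bar> - min (int j) \<bar>a\<bar>\<bar>"
      by (simp add: abs_mult)
    also have "\<dots> \<le> \<bar>a\<bar>"
      by (cases "a = 0") (auto simp: abs_sgn_eq)
    finally show ?thesis unfolding a_def .
  qed
  ultimately show thesis
    using that by (simp add: X_def Y_def)
qed

section \<open>Crossing numbers on the cylinder\<close>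

definition on_loop :: "int \<Rightarrow> (nat \<Rightarrow> int) \<Rightarrow> (nat \<Rightarrow> int) \<Rightarrow> nat \<Rightarrow> int \<Rightarrow> int \<Rightarrow> bool" where
  "on_loop N X Y M a b \<longleftrightarrow> (\<exists>s<M. Y s = b \<and> N dvd X s - a)"

text \<open>
  \<open>crossing N X a t\<close> is the signed crossing of step \<open>t\<close> with the vertical lines
  \<open>x = a + 1/2 (mod N)\<close>; \<open>crossing_number\<close> counts only the crossings above height \<open>b\<close>,
  i.e.\ with the vertical half-line over \<open>(a + 1/2, b)\<close> in the cylinder \<open>(\<int>/N\<int>) \<times> \<int>\<close>.
\<close>

definition crossing :: "int \<Rightarrow> (nat \<Rightarrow> int) \<Rightarrow> int \<Rightarrow> nat \<Rightarrow> int" where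
  "crossing N X a t =
     of_bool (X (Suc t) = X t + 1 \<and> N dvd X t - a) - of_bool (X (Suc t) = X t - 1 \<and> N dvd X (Suc t) - a)"

definition crossing_number :: "int \<Rightarrow> (nat \<Rightarrow> int) \<Rightarrow> (nat \<Rightarrow> int) \<Rightarrow> nat \<Rightarrow> int \<Rightarrow> int \<Rightarrow> int" where
  "crossing_number N X Y M a b = (\<Sum>t<M. if b < Y t then crossing N X a t else 0)"

locale cylinder_loop =
  fixes N :: int and X Y :: "nat \<Rightarrow> int" and M :: nat
  assumes N_pos: "0 < N" and walk: "lattice_walk X Y M"
    and X_M: "X M = X 0 + N" and Y_M: "Y M = Y 0"
begin

lemma M_pos: "0 < M"
  using X_M N_pos by (cases M) auto

lemma on_loop_Suc:
  assumes "t < M" "N dvd X (Suc t) - a"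
  shows "on_loop N X Y M a (Y (Suc t))"
proof (cases "Suc t < M")
  case True
  with assms(2) show ?thesis
    unfolding on_loop_def by (intro exI[of _ "Suc t"]) simp
next
  case False
  with assms(1) have "Suc t = M" by simp
  with assms(2) have "N dvd X 0 - a"
    using X_M dvd_diff_shift_iff(1)[of N "X 0" a] by simp
  moreover have "Y (Suc t) = Y 0"
    using \<open>Suc t = M\<close> Y_M by simp
  ultimately show ?thesis
    using M_pos unfolding on_loop_def by (intro exI[of _ 0]) simp
qed

lemma on_loop_if_crossing:
  assumes "t < M" "crossing N X a t \<noteq> 0"
  shows "on_loop N X Y M a (Y t)"
  using walk assms(1)
proof (cases rule: lattice_walk_step_cases)
  case 1
  with assms show ?thesis unfolding on_loop_def crossing_def by auto
next
  case 2
  with assms on_loop_Suc[of t a] show ?thesis unfolding crossing_def by auto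
qed (use assms in \<open>auto simp: crossing_def\<close>)

lemma crossing_number_Suc_height:
  assumes "\<not> on_loop N X Y M a (b + 1)"
  shows "crossing_number N X Y M a (b + 1) = crossing_number N X Y M a b"
  unfolding crossing_number_def
proof (rule sum.cong)
  fix t assume "t \<in> {..<M}"
  with assms on_loop_if_crossing[of t a]
  show "(if b + 1 < Y t then crossing N X a t else 0) = (if b < Y t then crossing N X a t else 0)"
    by (cases "Y t = b + 1") auto
qed simp

lemma crossing_number_Suc_column:
  assumes off: "\<not> on_loop N X Y M (a + 1) b"
  shows "crossing_number N X Y M (a + 1) b = crossing_number N X Y M a b"
proof -
  define S where "S t = (of_bool :: bool \<Rightarrow> int) (N dvd X t - (a + 1) \<and> b < Y t)" for t
  have step: "(if b < Y t then crossing N X (a + 1) t else 0) - (if b < Y t then crossing N X a t else 0)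
      = S t - S (Suc t)" if "t < M" for t
    using walk that
  proof (cases rule: lattice_walk_step_cases)
    case 2
    then show ?thesis unfolding S_def crossing_def by (simp add: diff_diff_eq add.commute)
  next
    case 3
    with off that have "\<not> (N dvd X t - (a + 1) \<and> Y t = b)"
      unfolding on_loop_def by auto
    with 3 show ?thesis unfolding S_def crossing_def by auto
  next
    case 4
    with off that on_loop_Suc[of t "a + 1"] have "\<not> (N dvd X t - (a + 1) \<and> Y t = b + 1)"
      by auto
    with 4 show ?thesis unfolding S_def crossing_def by auto
  qed (simp add: S_def crossing_def)
  have "crossing_number N X Y M (a + 1) b - crossing_number N X Y M a b = (\<Sum>t<M. S t - S (Suc t))"
    unfolding crossing_number_def sum_subtractf[symmetric] using step by (intro sum.cong) auto
  also have "\<dots> = S 0 - S M"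
    by (rule sum_lessThan_telescope')
  also have "\<dots> = 0"
    unfolding S_def X_M Y_M by (simp add: dvd_diff_shift_iff)
  finally show ?thesis by simp
qed

lemma crossing_number_adjacent:
  assumes "\<bar>a' - a\<bar> + \<bar>b' - b\<bar> = 1"
    and "\<not> on_loop N X Y M a b" "\<not> on_loop N X Y M a' b'"
  shows "crossing_number N X Y M a b = crossing_number N X Y M a' b'"
proof -
  from assms(1) consider "a' = a + 1" "b' = b" | "a = a' + 1" "b' = b" | "a' = a" "b' = b + 1" | "a' = a" "b = b' + 1"
    by linarith
  then show ?thesis
    by cases (use assms(2,3) crossing_number_Suc_column crossing_number_Suc_height in auto)
qed

lemma on_loop_shift: "on_loop N X Y M (a + N) b \<longleftrightarrow> on_loop N X Y M a b"
  unfolding on_loop_def by (simp add: dvd_diff_shift_iff)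

lemma crossing_number_shift: "crossing_number N X Y M (a + N) b = crossing_number N X Y M a b"
  unfolding crossing_number_def crossing_def by (simp only: dvd_diff_shift_iff)

lemma crossing_number_above:
  assumes "\<And>t. t < M \<Longrightarrow> Y t \<le> b"
  shows "crossing_number N X Y M a b = 0"
proof -
  have "\<not> b < Y t" if "t < M" for t
    using assms[OF that] by simp
  then show ?thesis
    unfolding crossing_number_def by simp
qed

lemma sum_crossing: "(\<Sum>t<M. crossing N X a t) = 1"
proof -
  define G where "G x = (x - a - 1) div N" for x
  have step: "crossing N X a t = G (X (Suc t)) - G (X t)" if "t < M" for t
    using walk that
  proof (cases rule: lattice_walk_step_cases)
    case 1
    then show ?thesis
      using div_succ_int[OF N_pos, of "X t - a - 1"] unfolding crossing_def G_def by simp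
  next
    case 2
    then show ?thesis
      using div_succ_int[OF N_pos, of "X t - a - 2"] unfolding crossing_def G_def
      by (simp add: diff_diff_eq add.commute)
  qed (simp_all add: crossing_def)
  have "(\<Sum>t<M. crossing N X a t) = (\<Sum>t<M. G (X (Suc t)) - G (X t))"
    using step by simp
  also have "\<dots> = G (X M) - G (X 0)"
    by (rule sum_lessThan_telescope)
  also have "\<dots> = 1"
  proof -
    have "X M - a - 1 = (X 0 - a - 1) + N" using X_M by simp
    then show ?thesis
      unfolding G_def using N_pos by (simp only: div_add_self2)
  qed
  finally show ?thesis .
qed

lemma crossing_number_below:
  assumes "\<And>t. t < M \<Longrightarrow> b \<le> Y t" and "\<not> on_loop N X Y M a b"
  shows "crossing_number N X Y M a b = 1"
proof -
  have "crossing_number N X Y M a b = (\<Sum>t<M. crossing N X a t)"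
    unfolding crossing_number_def
  proof (rule sum.cong)
    fix t assume "t \<in> {..<M}"
    with assms on_loop_if_crossing[of t a]
    show "(if b < Y t then crossing N X a t else 0) = crossing N X a t"
      by (cases "Y t = b") (auto simp: le_less)
  qed simp
  then show ?thesis using sum_crossing by simp
qed

lemma translate_off_loop_at_height:
  assumes "\<not> N dvd a" "t0 < M"
    and once: "\<And>u v. u < M \<Longrightarrow> v < M \<Longrightarrow> on_loop N X Y M (X u + a) (Y u) \<Longrightarrow>
      on_loop N X Y M (X v + a) (Y v) \<Longrightarrow> u = v"
  obtains t where "t < M" "Y t = Y t0" "\<not> on_loop N X Y M (X t + a) (Y t)"
proof (cases "on_loop N X Y M (X t0 + a) (Y t0)")
  case True
  then obtain s where s: "s < M" "Y s = Y t0" "N dvd X s - (X t0 + a)"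
    unfolding on_loop_def by auto
  from s(3) assms(1) have "s \<noteq> t0" by auto
  with once[of s t0] s \<open>t0 < M\<close> True have "\<not> on_loop N X Y M (X s + a) (Y s)"
    by auto
  with s that show thesis by blast
qed (use that \<open>t0 < M\<close> in blast)

lemma crossing_number_translates_eq:
  assumes once: "\<And>u v. u < M \<Longrightarrow> v < M \<Longrightarrow> on_loop N X Y M (X u + a) (Y u) \<Longrightarrow>
      on_loop N X Y M (X v + a) (Y v) \<Longrightarrow> u = v"
    and "t1 < M" "t2 < M" "\<not> on_loop N X Y M (X t1 + a) (Y t1)" "\<not> on_loop N X Y M (X t2 + a) (Y t2)"
  shows "crossing_number N X Y M (X t1 + a) (Y t1) = crossing_number N X Y M (X t2 + a) (Y t2)"
proof (rule cyclic_chain_eq[where P = "\<lambda>t. \<not> on_loop N X Y M (X t + a) (Y t)"])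
  show "crossing_number N X Y M (X i + a) (Y i) = crossing_number N X Y M (X (Suc i) + a) (Y (Suc i))"
    if "i < M" "\<not> on_loop N X Y M (X i + a) (Y i)" "\<not> on_loop N X Y M (X (Suc i) + a) (Y (Suc i))" for i
    by (rule crossing_number_adjacent) (use walk that in \<open>simp_all add: lattice_walk_def\<close>)
  have "X M + a = (X 0 + a) + N" using X_M by simp
  then show "(\<not> on_loop N X Y M (X M + a) (Y M)) = (\<not> on_loop N X Y M (X 0 + a) (Y 0))"
    "crossing_number N X Y M (X M + a) (Y M) = crossing_number N X Y M (X 0 + a) (Y 0)"
    by (simp_all only: Y_M on_loop_shift crossing_number_shift)
qed (use assms in auto)

lemma two_le_card_translate_on_loop:
  assumes "\<not> N dvd a"
  shows "2 \<le> card {t. t < M \<and> on_loop N X Y M (X t + a) (Y t)}"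
proof (rule ccontr)
  assume "\<not> ?thesis"
  then have "card {t. t < M \<and> on_loop N X Y M (X t + a) (Y t)} \<le> Suc 0"
    by simp
  then have once: "u = v" if "u < M" "v < M" "on_loop N X Y M (X u + a) (Y u)"
    "on_loop N X Y M (X v + a) (Y v)" for u v
    using that by (subst (asm) card_le_Suc0_iff_eq) auto
  have heights: "finite (Y ` {..<M})" "Y ` {..<M} \<noteq> {}"
    using M_pos by auto
  obtain t0 where "t0 < M" "Y t0 = Max (Y ` {..<M})"
    using Max_in[OF heights] by auto
  with assms once obtain t1 where t1: "t1 < M" "Y t1 = Max (Y ` {..<M})"
    "\<not> on_loop N X Y M (X t1 + a) (Y t1)"
    by (metis translate_off_loop_at_height)
  then have "crossing_number N X Y M (X t1 + a) (Y t1) = 0"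
    using heights by (intro crossing_number_above) simp
  obtain t0' where "t0' < M" "Y t0' = Min (Y ` {..<M})"
    using Min_in[OF heights] by auto
  with assms once obtain t2 where t2: "t2 < M" "Y t2 = Min (Y ` {..<M})"
    "\<not> on_loop N X Y M (X t2 + a) (Y t2)"
    by (metis translate_off_loop_at_height)
  then have "crossing_number N X Y M (X t2 + a) (Y t2) = 1"
    using heights by (intro crossing_number_below) simp_all
  with \<open>crossing_number N X Y M (X t1 + a) (Y t1) = 0\<close> show False
    using crossing_number_translates_eq[OF once t1(1) t2(1) t1(3) t2(3)] by simp
qed

end

section \<open>Counting the meetings of a loop with its translates\<close>

lemma congruent_translates:
  fixes N k d x y x' y' j j' :: int
  assumes "N = k * d" and c: "N dvd x - (y + j * d)" and c': "N dvd x' - (y' + j' * d)"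
    and "0 < d" "0 \<le> j" "j < k" "0 \<le> j'" "j' < k"
  shows "d dvd (x - y) - (x' - y')" and "x - y = x' - y' \<Longrightarrow> j = j'"
proof -
  from c c' \<open>N = k * d\<close> have "d dvd x - (y + j * d)" "d dvd x' - (y' + j' * d)"
    using dvd_mult_right by blast+
  then have "d dvd (x - (y + j * d)) - (x' - (y' + j' * d)) + (j - j') * d"
    using dvd_add[OF dvd_diff dvd_triv_right] by blast
  then show "d dvd (x - y) - (x' - y')"
    by (simp add: algebra_simps)
next
  assume "x - y = x' - y'"
  then have "(x - (y + j * d)) - (x' - (y' + j' * d)) = (j' - j) * d"
    unfolding left_diff_distrib by linarith
  with dvd_diff[OF c c'] \<open>N = k * d\<close> have "k * d dvd (j' - j) * d"
    by simp
  with \<open>0 < d\<close> have "k dvd j' - j" by simp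
  with assms(5-8) show "j = j'"
    using dvd_imp_le_int[of "j' - j" k] by linarith
qed

context cylinder_loop
begin

definition translate_hits :: "int \<Rightarrow> int \<Rightarrow> (int \<times> nat) set" where
  "translate_hits k d = (SIGMA j:{1..k - 1}. {t. t < M \<and> on_loop N X Y M (X t + j * d) (Y t)})"

definition witness :: "int \<Rightarrow> nat \<Rightarrow> nat" where
  "witness a t = (SOME s. s < M \<and> Y s = Y t \<and> N dvd X s - (X t + a))"

lemma witness_on_loop:
  assumes "on_loop N X Y M (X t + a) (Y t)"
  shows "witness a t < M" "Y (witness a t) = Y t" "N dvd X (witness a t) - (X t + a)"
  using someI_ex[OF assms[unfolded on_loop_def]] unfolding witness_def by blast+

lemma card_translate_hits_ge:
  assumes N: "N = k * d" and "0 < d"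
  shows "2 * (k - 1) \<le> int (card (translate_hits k d))"
proof -
  have "2 \<le> card {t. t < M \<and> on_loop N X Y M (X t + j * d) (Y t)}" if "j \<in> {1..k - 1}" for j
  proof (rule two_le_card_translate_on_loop)
    from that \<open>0 < d\<close> have "0 < j * d" "j * d < N"
      unfolding N by (simp_all add: mult_strict_right_mono)
    then show "\<not> N dvd j * d"
      using zdvd_not_zless by blast
  qed
  then have "(\<Sum>j\<in>{1..k - 1}. 2) \<le> (\<Sum>j\<in>{1..k - 1}. card {t. t < M \<and> on_loop N X Y M (X t + j * d) (Y t)})"
    by (intro sum_mono) simp
  then have "2 * nat (k - 1) \<le> card (translate_hits k d)"
    unfolding translate_hits_def by (simp add: card_SigmaI mult.commute)
  then have "int (2 * nat (k - 1)) \<le> int (card (translate_hits k d))"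
    by (rule of_nat_mono)
  moreover have "2 * (k - 1) \<le> int (2 * nat (k - 1))"
    by simp
  ultimately show ?thesis
    by (rule order_trans[rotated])
qed

end

locale narrow_tail_loop = cylinder_loop +
  fixes k d :: int and m :: nat
  assumes N_eq: "N = k * d" and d_pos: "0 < d"
    and head_inj: "inj_on (\<lambda>t. (X t, Y t)) {..m}"
    and head_no_chord: "\<And>s t. s \<le> m \<Longrightarrow> t \<le> m \<Longrightarrow> s < M \<Longrightarrow> t < M \<Longrightarrow>
      Y s = Y t \<Longrightarrow> d dvd X s - X t \<Longrightarrow> X s = X t"
    and tail_narrow: "\<And>s t. m < s \<Longrightarrow> m < t \<Longrightarrow> s < M \<Longrightarrow> t < M \<Longrightarrow> \<bar>X s - X t\<bar> < d"
begin

lemma translate_hitsD: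
  assumes "(j, t) \<in> translate_hits k d"
  shows "t < M" "1 \<le> j" "j < k" "witness (j * d) t < M" "Y (witness (j * d) t) = Y t"
    "N dvd X (witness (j * d) t) - (X t + j * d)"
  using assms witness_on_loop[of t "j * d"] unfolding translate_hits_def by auto

lemma witness_far:
  assumes "(j, t) \<in> translate_hits k d"
  shows "d dvd X (witness (j * d) t) - X t" "X (witness (j * d) t) \<noteq> X t"
  using congruent_translates[OF N_eq translate_hitsD(6)[OF assms], of "X t" "X t" 0]
    translate_hitsD(2,3)[OF assms] d_pos by auto

lemma witness_in_tail:
  assumes "(j, t) \<in> translate_hits k d" "t \<le> m"
  shows "m < witness (j * d) t"
  using head_no_chord[of "witness (j * d) t" t] witness_far[OF assms(1)] translate_hitsD[OF assms(1)] assms(2)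
  by linarith

lemma witness_in_head:
  assumes "(j, t) \<in> translate_hits k d" "m < t"
  shows "witness (j * d) t \<le> m"
proof (rule ccontr)
  assume "\<not> witness (j * d) t \<le> m"
  with assms translate_hitsD[OF assms(1)] have "\<bar>X (witness (j * d) t) - X t\<bar> < d"
    using tail_narrow[of "witness (j * d) t" t] by auto
  with witness_far[OF assms(1)] show False
    using dvd_imp_le_int[of "X (witness (j * d) t) - X t" d] d_pos by auto
qed

text \<open>A meeting at a head time is charged to its witness in the tail, a meeting at a tail time to itself.\<close>

definition hit_code :: "int \<times> nat \<Rightarrow> nat \<times> bool" where
  "hit_code = (\<lambda>(j, t). if t \<le> m then (witness (j * d) t, False) else (t, True))"

lemma hit_code_image: "hit_code ` translate_hits k d \<subseteq> {m<..<M} \<times> UNIV"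
proof
  fix c assume "c \<in> hit_code ` translate_hits k d"
  then obtain j t where A: "(j, t) \<in> translate_hits k d" and c: "c = hit_code (j, t)"
    by auto
  show "c \<in> {m<..<M} \<times> UNIV"
  proof (cases "t \<le> m")
    case True
    with c translate_hitsD(4)[OF A] witness_in_tail[OF A] show ?thesis
      unfolding hit_code_def by simp
  next
    case False
    with c translate_hitsD(1)[OF A] show ?thesis
      unfolding hit_code_def by simp
  qed
qed

lemma inj_on_hit_code: "inj_on hit_code (translate_hits k d)"
proof (rule inj_onI, clarify)
  fix j t j' t'
  assume A: "(j, t) \<in> translate_hits k d" "(j', t') \<in> translate_hits k d"
    and code: "hit_code (j, t) = hit_code (j', t')"
  note translates = congruent_translates[OF N_eq translate_hitsD(6)[OF A(1)] translate_hitsD(6)[OF A(2)]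
      d_pos _ translate_hitsD(3)[OF A(1)] _ translate_hitsD(3)[OF A(2)]]
  note j_nonneg = translate_hitsD(2)[OF A(1)] translate_hitsD(2)[OF A(2)]
  show "j = j' \<and> t = t'"
  proof (cases "t \<le> m")
    case True
    with code have t': "t' \<le> m" and same: "witness (j * d) t = witness (j' * d) t'"
      unfolding hit_code_def by (auto split: if_splits)
    from same translate_hitsD(5)[OF A(1)] translate_hitsD(5)[OF A(2)] have Y: "Y t = Y t'"
      by simp
    from translates(1) j_nonneg same have "d dvd X t' - X t" by simp
    with head_no_chord[of t' t] t' True Y translate_hitsD(1)[OF A(1)] translate_hitsD(1)[OF A(2)]
    have X: "X t' = X t" by simp
    with translates(2) j_nonneg same have "j = j'" by simp
    moreover from head_inj X Y True t' have "t = t'" by (auto dest: inj_onD)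
    ultimately show ?thesis by simp
  next
    case False
    with code have "t = t'"
      unfolding hit_code_def by (auto split: if_splits)
    with False A have head: "witness (j * d) t \<le> m" "witness (j' * d) t \<le> m"
      using witness_in_head by (auto simp: not_le)
    from translate_hitsD(5)[OF A(1)] translate_hitsD(5)[OF A(2)] \<open>t = t'\<close>
    have Y: "Y (witness (j * d) t) = Y (witness (j' * d) t)" by simp
    from translates(1) j_nonneg \<open>t = t'\<close> have "d dvd X (witness (j * d) t) - X (witness (j' * d) t)"
      by simp
    with head_no_chord head Y translate_hitsD(4)[OF A(1)] translate_hitsD(4)[OF A(2)] \<open>t = t'\<close>
    have "X (witness (j * d) t) = X (witness (j' * d) t)"
      by blast
    with translates(2) j_nonneg \<open>t = t'\<close> have "j = j'" by simp
    with \<open>t = t'\<close> show ?thesis by simp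
  qed
qed

lemma period_le_tail_length: "k - 1 \<le> int (card {m<..<M})"
proof -
  have "card (translate_hits k d) \<le> card ({m<..<M} \<times> (UNIV :: bool set))"
    using card_inj_on_le[OF inj_on_hit_code hit_code_image] by simp
  then have "int (card (translate_hits k d)) \<le> 2 * int (card {m<..<M})"
    by (simp add: card_cartesian_product)
  with card_translate_hits_ge[OF N_eq d_pos] have "2 * (k - 1) \<le> 2 * int (card {m<..<M})"
    by (rule order_trans)
  then show ?thesis
    by simp
qed

end

section \<open>Horizontal chords of lattice walks\<close>

lemma lattice_walk_closes_to_loop:
  assumes "lattice_walk X Y m" "0 < N"
  defines "M \<equiv> m + nat (\<bar>X 0 + N - X m\<bar> + \<bar>Y 0 - Y m\<bar>)"
  obtains X' Y' where "cylinder_loop N X' Y' M" "\<And>t. t \<le> m \<Longrightarrow> X' t = X t \<and> Y' t = Y t"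
    "\<And>s t. m \<le> s \<Longrightarrow> m \<le> t \<Longrightarrow> \<bar>X' s - X' t\<bar> \<le> \<bar>X 0 + N - X m\<bar>"
proof -
  obtain TX TY where T: "lattice_walk TX TY (M - m)" "TX 0 = X m" "TY 0 = Y m"
    "TX (M - m) = X 0 + N" "TY (M - m) = Y 0" "\<And>i j. \<bar>TX i - TX j\<bar> \<le> \<bar>X 0 + N - X m\<bar>"
    using exists_straight_lattice_walk[where x = "X m" and y = "Y m" and x' = "X 0 + N" and y' = "Y 0"] unfolding M_def by auto
  define X' where "X' t = (if t \<le> m then X t else TX (t - m))" for t
  define Y' where "Y' t = (if t \<le> m then Y t else TY (t - m))" for t
  have tail: "X' t = TX (t - m)" "Y' t = TY (t - m)" if "m \<le> t" for t
    using that T(2,3) unfolding X'_def Y'_def by auto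
  have "lattice_walk X' Y' M"
    using lattice_walk_append[OF assms(1) T(1-3)] unfolding X'_def Y'_def M_def by simp
  moreover have "X' M = X' 0 + N" "Y' M = Y' 0"
    using tail[of M] T(4,5) unfolding M_def by (simp_all add: X'_def Y'_def)
  ultimately have "cylinder_loop N X' Y' M"
    using assms(2) by unfold_locales
  moreover have "\<bar>X' s - X' t\<bar> \<le> \<bar>X 0 + N - X m\<bar>" if "m \<le> s" "m \<le> t" for s t
    using tail that T(6) by simp
  ultimately show thesis
    using that unfolding X'_def Y'_def by simp
qed

lemma inj_on_chordless_walk:
  assumes walk: "lattice_walk X Y m" and chordless: "\<not> has_chord d X Y m"
    and shorter: "\<And>X' Y' m'. m' < m \<Longrightarrow> lattice_walk X' Y' m' \<Longrightarrow>
      X' m' - X' 0 = X m - X 0 \<Longrightarrow> Y' m' - Y' 0 = Y m - Y 0 \<Longrightarrow> has_chord d X' Y' m'"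
  shows "inj_on (\<lambda>t. (X t, Y t)) {..m}"
proof (rule inj_onI, rule ccontr)
  fix s t assume "s \<in> {..m}" "t \<in> {..m}" "(X s, Y s) = (X t, Y t)" "s \<noteq> t"
  then obtain u v where "u < v" "v \<le> m" "X u = X v" "Y u = Y v"
    by (metis Pair_inject atMost_iff linorder_neq_iff)
  then obtain X' Y' m' where "m' < m" "lattice_walk X' Y' m'"
    "X' 0 = X 0" "Y' 0 = Y 0" "X' m' = X m" "Y' m' = Y m" "has_chord d X' Y' m' \<Longrightarrow> has_chord d X Y m"
    using loop_erasure[OF walk] by metis
  with shorter chordless show False
    by simp
qed

lemma chordless_segment_spans_walk:
  assumes walk: "lattice_walk X Y m" and chordless: "\<not> has_chord d X Y m"
    and shorter: "\<And>X' Y' m' l. m' < m \<Longrightarrow> lattice_walk X' Y' m' \<Longrightarrow>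
      X' m' - X' 0 = l * d \<Longrightarrow> Y' m' = Y' 0 \<Longrightarrow> 0 < l \<Longrightarrow> has_chord d X' Y' m'"
    and uv: "u < v" "v \<le> m" "Y u = Y v" "X v - X u = l * d" "0 < l"
  shows "u = 0 \<and> v = m"
proof (rule ccontr)
  assume "\<not> (u = 0 \<and> v = m)"
  with uv have "v - u < m" by auto
  moreover have "lattice_walk (\<lambda>i. X (u + i)) (\<lambda>i. Y (u + i)) (v - u)"
    using lattice_walk_segment[OF walk] uv by simp
  ultimately have "has_chord d (\<lambda>i. X (u + i)) (\<lambda>i. Y (u + i)) (v - u)"
    by (rule shorter[where l = l]) (use uv in simp_all)
  then have "has_chord d X Y m"
    by (rule has_chord_segment) (use uv in simp)
  with chordless show False ..
qed

lemma chordless_horizontal_multiples_at_ends: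
  assumes "0 < d" and walk: "lattice_walk X Y m" and chordless: "\<not> has_chord d X Y m"
    and shorter: "\<And>X' Y' m' l. m' < m \<Longrightarrow> lattice_walk X' Y' m' \<Longrightarrow>
      X' m' - X' 0 = l * d \<Longrightarrow> Y' m' = Y' 0 \<Longrightarrow> 0 < l \<Longrightarrow> has_chord d X' Y' m'"
    and st: "s \<le> m" "t \<le> m" "Y s = Y t" "d dvd X t - X s" "X s \<noteq> X t"
  shows "{s, t} = {0, m}"
proof -
  from st(4) obtain c where c: "X t - X s = c * d"
    by (metis dvd_def mult.commute)
  with st(5) have "c \<noteq> 0" by auto
  have rev: "lattice_walk (\<lambda>i. X (m - i)) (\<lambda>i. Y (m - i)) m" "\<not> has_chord d (\<lambda>i. X (m - i)) (\<lambda>i. Y (m - i)) m"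
    using lattice_walk_reverse[OF walk] has_chord_reverse chordless by auto
  have fwd: "u = 0 \<and> v = m" if "u < v" "v \<le> m" "Y u = Y v" "X v - X u = l * d" "0 < l" for u v l
    using walk chordless shorter that by (rule chordless_segment_spans_walk)
  have bwd: "u = 0 \<and> v = m" if "u < v" "v \<le> m" "Y (m - u) = Y (m - v)" "X (m - v) - X (m - u) = l * d" "0 < l"
    for u v l
    using rev shorter that by (rule chordless_segment_spans_walk)
  from st(5) consider "s < t" | "t < s" by fastforce
  then show ?thesis
  proof cases
    case 1
    show ?thesis
    proof (cases "0 < c")
      case True
      with fwd[of s t c] 1 st c show ?thesis by auto
    next
      case False
      have "m - t < m - s" "m - (m - t) = t" "m - (m - s) = s"
        using 1 st by auto
      with False bwd[of "m - t" "m - s" "- c"] st c \<open>c \<noteq> 0\<close> show ?thesis by auto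
    qed
  next
    case 2
    show ?thesis
    proof (cases "0 < c")
      case True
      have "m - s < m - t" "m - (m - t) = t" "m - (m - s) = s"
        using 2 st by auto
      with True bwd[of "m - s" "m - t" c] st c show ?thesis by auto
    next
      case False
      with fwd[of t s "- c"] 2 st c \<open>c \<noteq> 0\<close> show ?thesis by auto
    qed
  qed
qed

lemma chordless_walk_period_bound:
  assumes "0 < d" and walk: "lattice_walk X Y m"
    and disp: "X m - X 0 = k * d + r" "Y m - Y 0 = h" and "\<bar>r\<bar> < d" "0 < k"
    and inj: "inj_on (\<lambda>t. (X t, Y t)) {..m}"
    and ends: "\<And>s t. s \<le> m \<Longrightarrow> t \<le> m \<Longrightarrow> Y s = Y t \<Longrightarrow> d dvd X t - X s \<Longrightarrow> X s \<noteq> X t \<Longrightarrow>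
      {s, t} = {0, m}"
  shows "k \<le> max 1 (\<bar>r\<bar> + \<bar>h\<bar>)"
proof -
  define M where "M = m + nat (\<bar>r\<bar> + \<bar>h\<bar>)"
  have head_no_chord: "X s = X t"
    if "s \<le> m" "t \<le> m" "s < M" "t < M" "Y s = Y t" "d dvd X s - X t" for s t
  proof (rule ccontr)
    assume "X s \<noteq> X t"
    with that ends[of t s] have "{t, s} = {0, m}" by simp
    with that have "Y m = Y 0" "d dvd X m - X 0"
      by (auto simp: doubleton_eq_iff dvd_diff_commute)
    with disp have "h = 0" "d dvd r"
      by (simp_all add: dvd_add_right_iff)
    with \<open>\<bar>r\<bar> < d\<close> have "r = 0"
      using dvd_imp_le_int[of r d] by fastforce
    with \<open>h = 0\<close> that \<open>{t, s} = {0, m}\<close> show False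
      unfolding M_def by (auto simp: doubleton_eq_iff)
  qed
  from \<open>0 < d\<close> \<open>0 < k\<close> have "0 < k * d" by simp
  then obtain X' Y' where loop: "cylinder_loop (k * d) X' Y' M"
    and head: "\<And>t. t \<le> m \<Longrightarrow> X' t = X t \<and> Y' t = Y t"
    and tail: "\<And>s t. m \<le> s \<Longrightarrow> m \<le> t \<Longrightarrow> \<bar>X' s - X' t\<bar> \<le> \<bar>r\<bar>"
    using lattice_walk_closes_to_loop[OF walk, of "k * d"] disp unfolding M_def by (auto simp: algebra_simps)
  interpret narrow_tail_loop "k * d" X' Y' M k d m
  proof unfold_locales
    show "inj_on (\<lambda>t. (X' t, Y' t)) {..m}"
      using inj head by (auto simp: inj_on_def)
    show "X' s = X' t" if "s \<le> m" "t \<le> m" "s < M" "t < M" "Y' s = Y' t" "d dvd X' s - X' t" for s t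
      using head_no_chord[of s t] head that by simp
    show "\<bar>X' s - X' t\<bar> < d" if "m < s" "m < t" for s t
      using tail[of s t] that \<open>\<bar>r\<bar> < d\<close> by simp
  qed (use loop \<open>0 < d\<close> in \<open>simp_all add: cylinder_loop_def\<close>)
  from period_le_tail_length have "k - 1 \<le> int (nat (\<bar>r\<bar> + \<bar>h\<bar>) - 1)"
    unfolding M_def by simp
  then show ?thesis
    by linarith
qed

theorem lattice_walk_has_chord:
  assumes "0 < d" "lattice_walk X Y m" "X m - X 0 = k * d + r" "Y m - Y 0 = h"
    "\<bar>r\<bar> < d" "\<bar>r\<bar> + \<bar>h\<bar> < k"
  shows "has_chord d X Y m"
  using assms(2-6)
proof (induction m arbitrary: X Y k r h rule: less_induct)
  case (less m X Y k r h)
  note walk = less.prems(1) and disp = less.prems(2,3) and bounds = less.prems(4,5)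
  show ?case
  proof (rule ccontr)
    assume chordless: "\<not> has_chord d X Y m"
    have inj: "inj_on (\<lambda>t. (X t, Y t)) {..m}"
      using walk chordless by (rule inj_on_chordless_walk) (use less.IH disp bounds in auto)
    have shorter: "has_chord d X' Y' m'"
      if "m' < m" "lattice_walk X' Y' m'" "X' m' - X' 0 = l * d" "Y' m' = Y' 0" "0 < l" for X' Y' m' l
      using less.IH[of m' X' Y' l 0 0] that assms(1) by simp
    have ends: "{s, t} = {0, m}"
      if "s \<le> m" "t \<le> m" "Y s = Y t" "d dvd X t - X s" "X s \<noteq> X t" for s t
      using assms(1) walk chordless shorter that by (rule chordless_horizontal_multiples_at_ends)
    from bounds have "0 < k" by linarith
    with assms(1) walk disp bounds(1) have "k \<le> max 1 (\<bar>r\<bar> + \<bar>h\<bar>)"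
      using inj ends by (rule chordless_walk_period_bound)
    with bounds have "k = 1" "r = 0" "h = 0"
      by auto
    with disp have "X m = X 0 + d" "Y m = Y 0"
      by simp_all
    then have "has_chord d X Y m"
      unfolding has_chord_def by blast
    with chordless show False ..
  qed
qed

section \<open>The statement for Gaussian integers\<close>

lemma centered_division_unique:
  fixes n d k k' r r' :: int
  assumes "0 < d" "n = k * d + r" "- (d div 2) \<le> r" "r \<le> (d + 1) div 2 - 1"
    "n = k' * d + r'" "- (d div 2) \<le> r'" "r' \<le> (d + 1) div 2 - 1"
  shows "k = k'"
proof (rule ccontr)
  assume "k \<noteq> k'"
  then have "d \<le> \<bar>(k - k') * d\<bar>"
    using \<open>0 < d\<close> by (simp add: abs_mult mult_le_cancel_right1)
  moreover have "(k - k') * d = r' - r"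
    using assms(2,5) by (simp add: algebra_simps)
  moreover have "(d + 1) div 2 + d div 2 = d"
    by presburger
  ultimately show False
    using assms(3,4,6,7) by linarith
qed

lemma centered_division:
  fixes n d :: int
  assumes "0 < d"
  shows "n = cdiv_k n d * d + cdiv_r n d" "\<bar>cdiv_r n d\<bar> < d"
proof -
  define P where "P k r \<longleftrightarrow> n = k * d + r \<and> - (d div 2) \<le> r \<and> r \<le> (d + 1) div 2 - 1" for k r
  define k where "k = (n + d div 2) div d"
  define r where "r = n - k * d"
  have "r = (n + d div 2) mod d - d div 2"
    unfolding r_def k_def by (simp add: minus_div_mult_eq_mod[symmetric])
  moreover have "0 \<le> (n + d div 2) mod d" "(n + d div 2) mod d < d"
    using assms by simp_all
  moreover have halves: "(d + 1) div 2 + d div 2 = d"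
    by presburger
  ultimately have P: "P k r"
    unfolding P_def by (simp add: r_def)
  have unique: "k' = k" if "P k' r'" for k' r'
    using centered_division_unique[OF assms] that P unfolding P_def by blast
  have "cdiv_k n d = k"
    unfolding cdiv_k_def P_def[symmetric] using P unique by blast
  moreover have "cdiv_r n d = r"
    unfolding cdiv_r_def P_def[symmetric] using P unique unfolding P_def r_def by auto
  ultimately show "n = cdiv_k n d * d + cdiv_r n d" "\<bar>cdiv_r n d\<bar> < d"
    using P halves assms unfolding P_def by auto
qed

lemma gauss_int_floor_eq:
  assumes "gauss_int z"
  shows "z = of_int \<lfloor>Re z\<rfloor> + \<i> * of_int \<lfloor>Im z\<rfloor>"
  using assms unfolding gauss_int_def by (auto simp: complex_eq_iff elim!: Ints_cases)

lemma abs_add_abs_eq_1_if_sum_squares: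
  fixes p q :: int
  assumes "p\<^sup>2 + q\<^sup>2 = 1"
  shows "\<bar>p\<bar> + \<bar>q\<bar> = 1"
proof -
  have "p\<^sup>2 \<le> 1" "q\<^sup>2 \<le> 1"
    using assms zero_le_power2[of p] zero_le_power2[of q] by linarith+
  then have "\<bar>p\<bar> \<le> 1" "\<bar>q\<bar> \<le> 1"
    by (simp_all add: abs_square_le_1)
  then have "p \<in> {-1, 0, 1}" "q \<in> {-1, 0, 1}"
    by auto
  with assms show ?thesis
    by auto
qed

lemma gauss_int_unit_step:
  assumes "gauss_int a" "gauss_int b" "cmod (b - a) = 1"
  shows "\<bar>\<lfloor>Re b\<rfloor> - \<lfloor>Re a\<rfloor>\<bar> + \<bar>\<lfloor>Im b\<rfloor> - \<lfloor>Im a\<rfloor>\<bar> = 1"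
proof (rule abs_add_abs_eq_1_if_sum_squares)
  have "b - a = of_int (\<lfloor>Re b\<rfloor> - \<lfloor>Re a\<rfloor>) + \<i> * of_int (\<lfloor>Im b\<rfloor> - \<lfloor>Im a\<rfloor>)"
    using gauss_int_floor_eq[OF assms(1)] gauss_int_floor_eq[OF assms(2)] by (simp add: algebra_simps)
  with assms(3) have "real_of_int ((\<lfloor>Re b\<rfloor> - \<lfloor>Re a\<rfloor>)\<^sup>2 + (\<lfloor>Im b\<rfloor> - \<lfloor>Im a\<rfloor>)\<^sup>2) = 1"
    by (simp add: cmod_def)
  then show "(\<lfloor>Re b\<rfloor> - \<lfloor>Re a\<rfloor>)\<^sup>2 + (\<lfloor>Im b\<rfloor> - \<lfloor>Im a\<rfloor>)\<^sup>2 = 1"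
    by linarith
qed

theorem mainTheorem5:
  fixes n d :: nat and h :: int and z :: "nat \<Rightarrow> complex" and j1 j2 :: nat
  assumes hd: "d \<ge> 1"
    and hz: "\<And>j. gauss_int (z j)"
    and hstep: "\<And>j. cmod (z (Suc j) - z j) = 1"
    and hj: "z j2 - z j1 = of_nat n + \<i> * of_int h"
    and hk: "cdiv_k (int n) (int d) \<ge> \<bar>cdiv_r (int n) (int d)\<bar> + \<bar>h\<bar> + 1"
  shows "\<exists>j3 j4. z j3 - z j4 = of_nat d"
proof -
  define X where "X j = \<lfloor>Re (z j)\<rfloor>" for j
  define Y where "Y j = \<lfloor>Im (z j)\<rfloor>" for j
  have z: "z j = of_int (X j) + \<i> * of_int (Y j)" for j
    unfolding X_def Y_def using hz by (rule gauss_int_floor_eq)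
  have "lattice_walk X Y m" for m
    unfolding lattice_walk_def X_def Y_def using hz hstep by (simp add: gauss_int_unit_step)
  then obtain X' Y' m where walk: "lattice_walk X' Y' m"
    and disp: "X' m - X' 0 = X j2 - X j1" "Y' m - Y' 0 = Y j2 - Y j1"
    and chord: "has_chord (int d) X' Y' m \<Longrightarrow> \<exists>s t. X t = X s + int d \<and> Y t = Y s"
    by (rule lattice_walk_between[where i = j1 and j = j2 and d = "int d"]) blast
  from hj have "X j2 - X j1 = int n" "Y j2 - Y j1 = h"
    unfolding z by (simp_all add: complex_eq_iff flip: of_int_diff)
  have "0 < int d" using hd by simp
  from centered_division[OF this] disp \<open>X j2 - X j1 = int n\<close> \<open>Y j2 - Y j1 = h\<close> hk
  have "X' m - X' 0 = cdiv_k (int n) (int d) * int d + cdiv_r (int n) (int d)" "Y' m - Y' 0 = h"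
    "\<bar>cdiv_r (int n) (int d)\<bar> < int d" "\<bar>cdiv_r (int n) (int d)\<bar> + \<bar>h\<bar> < cdiv_k (int n) (int d)"
    by simp_all
  with \<open>0 < int d\<close> walk have "has_chord (int d) X' Y' m"
    by (rule lattice_walk_has_chord)
  then obtain s t where "X t = X s + int d" "Y t = Y s"
    using chord by blast
  then have "z t - z s = of_nat d"
    unfolding z by simp
  then show ?thesis
    by blast
qed

end
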